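(* Let $\phi_{\mathrm{NH}}(y,t)=t^{-1/2}\exp(y^2/(2t))$ and $\log\Phi(\boldsymbol x,t)=\log\sum_{i=1}^N\phi_{\mathrm{NH}}(x_i,t)$ on $\mathbb{R}^N\times(0,\infty)$. Fix $(\boldsymbol x,t)$ and $(\Delta\boldsymbol x,\Delta t)$ with $t>0$ and $t+\Delta t>0$, and let $(\boldsymbol x(s),t(s))=(\boldsymbol x,t)+s(\Delta\boldsymbol x,\Delta t)$, $s\in[0,1]$, with $$t_\star:=\min_{s\in[0,1]}t(s),\qquad K_{\rm seg}:=\sup_{s\in[0,1]}\max_{1\le i\le N}\frac{x_i(s)^2}{t(s)}.$$ Then $\log\Phi$ satisfies $(1,2)$-generalized self-concordance on the segment $\mathcal C=\{(\boldsymbol x(s),t(s)):s\in[0,1]\}$ with respect to the norm $$\|(\bar{\boldsymbol x},\bar t)\|_*=A_x\|\bar{\boldsymbol x}\|_\infty+A_t|\bar t|,\qquad A_x=\frac{8\sqrt{K_{\rm seg}\vee1}}{\sqrt{t_\star}},\quad A_t=\frac{16(K_{\rm seg}\vee1)}{t_\star}.$$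
   Context: A $C^3$ function $f$ on an open set $\mathrm{dom}(f)\subseteq\mathbb{R}^p$ satisfies $(M,2)$-generalized self-concordance in a norm $\|\cdot\|_*$ on $\mathcal C\subseteq\mathrm{dom}(f)$ if for all $\boldsymbol x\in\mathcal C$ and $\boldsymbol u,\boldsymbol v\in\mathbb{R}^p$: $|\nabla^3f(\boldsymbol x)[\boldsymbol u,\boldsymbol u,\boldsymbol v]|\le M\|\boldsymbol v\|_*\,\boldsymbol u^{\mathsf T}\nabla^2f(\boldsymbol x)\boldsymbol u$. $a\vee b=\max\{a,b\}$. *)

theory Defs
  imports "HOL-Analysis.Analysis"
begin

text \<open>Three-times continuously (Frechet) differentiable on an open set S, with the
  derivative tensors given as iterated bounded linear functions.
  f1 x = Df(x), f2 x = D^2 f(x), f3 x = D^3 f(x);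
  f2 x h k = nabla^2 f(x)[h,k],  f3 x h k l = nabla^3 f(x)[h,k,l].\<close>
definition C3_derivs_on ::
  "'a::real_normed_vector set \<Rightarrow> ('a \<Rightarrow> real) \<Rightarrow> ('a \<Rightarrow> 'a \<Rightarrow>\<^sub>L real)
     \<Rightarrow> ('a \<Rightarrow> 'a \<Rightarrow>\<^sub>L 'a \<Rightarrow>\<^sub>L real) \<Rightarrow> ('a \<Rightarrow> 'a \<Rightarrow>\<^sub>L 'a \<Rightarrow>\<^sub>L 'a \<Rightarrow>\<^sub>L real) \<Rightarrow> bool" where
  "C3_derivs_on S f f1 f2 f3 \<longleftrightarrow>
     (\<forall>x\<in>S. (f has_derivative blinfun_apply (f1 x)) (at x)) \<and>
     (\<forall>x\<in>S. (f1 has_derivative blinfun_apply (f2 x)) (at x)) \<and>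
     (\<forall>x\<in>S. (f2 has_derivative blinfun_apply (f3 x)) (at x)) \<and>
     continuous_on S f3"

definition gen_self_concordant ::
  "('a::real_normed_vector \<Rightarrow> real) \<Rightarrow> 'a set \<Rightarrow> ('a \<Rightarrow> real) \<Rightarrow> real \<Rightarrow> 'a set \<Rightarrow> bool" where
  "gen_self_concordant f D nrm M C \<longleftrightarrow>
     open D \<and> C \<subseteq> D \<and>
     (\<exists>f1 f2 f3. C3_derivs_on D f f1 f2 f3 \<and>
        (\<forall>x\<in>C. \<forall>u v.
           \<bar>blinfun_apply (blinfun_apply (blinfun_apply (f3 x) u) u) v\<bar>
             \<le> M * nrm v * blinfun_apply (blinfun_apply (f2 x) u) u))"

definition phi_NH :: "real \<Rightarrow> real \<Rightarrow> real" where
  "phi_NH y t = t powr (-1/2) * exp (y\<^sup>2 / (2 * t))"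

definition logPhi :: "(real^'n) \<times> real \<Rightarrow> real" where
  "logPhi z = ln (\<Sum>i\<in>UNIV. phi_NH (fst z $ i) (snd z))"

end

theory Submission
  imports Defs
begin

text \<open>\<open>log \<Phi>\<close> is the log-sum-exp \<open>ln (\<Sum>i. exp (h\<^sub>i))\<close> of the exponents
  \<open>h\<^sub>i (x, t) = x\<^sub>i\<^sup>2 / (2 t) - ln t / 2\<close>. With \<open>E\<close> the average under the softmax weights
  and \<open>c\<^sub>i = Dh\<^sub>i - E Dh\<close>, its second derivative is \<open>E (D\<^sup>2h + c \<otimes> c)\<close> and its third is
  \<open>E (D\<^sup>3h + 3 sym (D\<^sup>2h \<otimes> c) + c \<otimes> c \<otimes> c)\<close>. In the coordinates
  \<open>\<alpha> = (u\<^sub>i - x\<^sub>i \<tau> / t) / sqrt t\<close>, \<open>\<beta> = \<tau> / t\<close> of a direction \<open>u = (u\<^sub>x, \<tau>)\<close> one has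
  \<open>D\<^sup>2h\<^sub>i[u,u] = \<alpha>\<^sup>2 + \<beta>\<^sup>2 / 2\<close>, and \<open>D\<^sup>3h\<^sub>i\<close> is cubic in \<open>(\<alpha>, \<beta>)\<close>. If \<open>x\<^sub>i\<^sup>2 / t \<le> K\<close>, the
  quantities attached to the third direction \<open>v\<close> are bounded by \<open>\<parallel>v\<^sub>x\<parallel>\<^sub>\<infinity> / sqrt t\<close> and
  \<open>\<bar>v\<^sub>t\<bar> / t\<close> up to factors \<open>sqrt K\<close> and \<open>K\<close>, and AM-GM then bounds every summand of
  \<open>D\<^sup>3 log \<Phi>[u,u,v]\<close> by the matching summand of \<open>D\<^sup>2 log \<Phi>[u,u]\<close>. Along the segment,
  \<open>t \<ge> t\<^sub>\<star>\<close> and \<open>x\<^sub>i\<^sup>2 / t \<le> K\<^sub>s\<^sub>e\<^sub>g\<close>.\<close>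

section \<open>Bounded linear maps on Euclidean spaces\<close>

lemma blinfun_eq_sum_Basis:
  fixes A :: "'b::euclidean_space \<Rightarrow>\<^sub>L 'c::real_normed_vector"
  shows "A = (\<Sum>b\<in>Basis. blinfun_scaleR_left (A b) o\<^sub>L blinfun_inner_left b)"
proof (rule blinfun_eqI)
  fix v :: 'b
  have "A v = A (\<Sum>b\<in>Basis. (v \<bullet> b) *\<^sub>R b)"
    by (simp add: euclidean_representation)
  then show "A v = blinfun_apply (\<Sum>b\<in>Basis. blinfun_scaleR_left (A b) o\<^sub>L blinfun_inner_left b) v"
    by (simp add: blinfun.sum_left blinfun.sum_right blinfun.scaleR_right)
qed

lemma has_derivative_blinfun_componentwise:
  fixes F F' :: "'a::real_normed_vector \<Rightarrow> 'b::euclidean_space \<Rightarrow>\<^sub>L 'c::real_normed_vector"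
  assumes "\<And>b. b \<in> Basis \<Longrightarrow> ((\<lambda>z. F z b) has_derivative (\<lambda>h. F' h b)) (at x)"
  shows "(F has_derivative F') (at x)"
proof -
  let ?R = "\<lambda>b w. blinfun_scaleR_left w o\<^sub>L blinfun_inner_left b"
  have R: "bounded_linear (?R b)" for b :: 'b
    by (rule bounded_linear_compose[OF
          bounded_bilinear.bounded_linear_left[OF bounded_bilinear_blinfun_compose]
          bounded_linear_blinfun_scaleR_left])
  have "((\<lambda>z. \<Sum>b\<in>Basis. ?R b (F z b)) has_derivative (\<lambda>h. \<Sum>b\<in>Basis. ?R b (F' h b))) (at x)"
    by (intro has_derivative_sum bounded_linear.has_derivative[OF R] assms)
  then show ?thesis
    by (simp only: blinfun_eq_sum_Basis[symmetric])
qed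

lemma continuous_on_blinfun_componentwise:
  fixes F :: "'a::topological_space \<Rightarrow> 'b::euclidean_space \<Rightarrow>\<^sub>L 'c::real_normed_vector"
  assumes "\<And>b. b \<in> Basis \<Longrightarrow> continuous_on S (\<lambda>z. F z b)"
  shows "continuous_on S F"
  using assms unfolding continuous_on_def by (auto intro!: tendsto_componentwise1)

lemma bounded_linear_Blinfun_curried:
  fixes Q :: "'a::euclidean_space \<Rightarrow> 'b::real_normed_vector \<Rightarrow> 'c::real_normed_vector"
  assumes "\<And>h. bounded_linear (Q h)" and "\<And>k. bounded_linear (\<lambda>h. Q h k)"
  shows "bounded_linear (\<lambda>h. Blinfun (Q h))"
proof -
  have "linear (\<lambda>h. Blinfun (Q h))"
  proof
    fix h h' :: 'a and r :: real
    show "Blinfun (Q (h + h')) = Blinfun (Q h) + Blinfun (Q h')"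
      by (rule blinfun_eqI)
        (simp add: bounded_linear_Blinfun_apply plus_blinfun.rep_eq assms
          linear_add[OF bounded_linear.linear[OF assms(2)]])
    show "Blinfun (Q (r *\<^sub>R h)) = r *\<^sub>R Blinfun (Q h)"
      by (rule blinfun_eqI)
        (simp add: bounded_linear_Blinfun_apply scaleR_blinfun.rep_eq assms
          linear_scale[OF bounded_linear.linear[OF assms(2)]])
  qed
  then show ?thesis
    by (simp add: linear_conv_bounded_linear)
qed

lemma Blinfun2_apply:
  fixes Q :: "'a::euclidean_space \<Rightarrow> 'b::real_normed_vector \<Rightarrow> 'c::real_normed_vector"
  assumes "\<And>h. bounded_linear (Q h)" and "\<And>k. bounded_linear (\<lambda>h. Q h k)"
  shows "Blinfun (\<lambda>h. Blinfun (Q h)) h k = Q h k"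
  by (simp add: bounded_linear_Blinfun_apply bounded_linear_Blinfun_curried assms)

lemma Blinfun3_apply:
  fixes Q :: "'a::euclidean_space \<Rightarrow> 'b::euclidean_space \<Rightarrow> 'c::real_normed_vector
    \<Rightarrow> 'd::real_normed_vector"
  assumes "\<And>h k. bounded_linear (Q h k)" and "\<And>h l. bounded_linear (\<lambda>k. Q h k l)"
    and "\<And>k l. bounded_linear (\<lambda>h. Q h k l)"
  shows "Blinfun (\<lambda>h. Blinfun (\<lambda>k. Blinfun (Q h k))) h k l = Q h k l"
proof -
  have "bounded_linear (\<lambda>h. Blinfun (Q h k))" for k
    by (intro bounded_linear_Blinfun_curried assms)
  then have "bounded_linear (\<lambda>h. Blinfun (\<lambda>k. Blinfun (Q h k)))"
    by (intro bounded_linear_Blinfun_curried bounded_linear_Blinfun_curried assms)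
  then show ?thesis
    by (simp add: bounded_linear_Blinfun_apply bounded_linear_Blinfun_curried assms)
qed

lemma bounded_linear_derivative_of_linear_family:
  fixes g :: "'a::real_normed_vector \<Rightarrow> 'b::euclidean_space \<Rightarrow> 'c::real_normed_vector"
  assumes "open S" "z \<in> S"
    and lin: "\<And>y. y \<in> S \<Longrightarrow> linear (g y)"
    and der: "\<And>u. ((\<lambda>y. g y u) has_derivative g' u) (at z)"
  shows "bounded_linear (\<lambda>u. g' u w)"
proof -
  have transfer: "g' u = G'" if "((\<lambda>y. g y u) has_derivative G') (at z)" for u G'
    using has_derivative_unique[OF der that] .
  have "linear (\<lambda>u. g' u w)"
  proof
    fix u v :: 'b and r :: real
    have "((\<lambda>y. g y u + g y v) has_derivative (\<lambda>w. g' u w + g' v w)) (at z)"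
      by (intro has_derivative_add der)
    then have "((\<lambda>y. g y (u + v)) has_derivative (\<lambda>w. g' u w + g' v w)) (at z)"
      by (rule has_derivative_transform_within_open[OF _ \<open>open S\<close> \<open>z \<in> S\<close>])
        (simp add: lin linear_add)
    then show "g' (u + v) w = g' u w + g' v w"
      by (simp add: transfer)
    have "((\<lambda>y. r *\<^sub>R g y u) has_derivative (\<lambda>w. r *\<^sub>R g' u w)) (at z)"
      by (intro has_derivative_scaleR_right der)
    then have "((\<lambda>y. g y (r *\<^sub>R u)) has_derivative (\<lambda>w. r *\<^sub>R g' u w)) (at z)"
      by (rule has_derivative_transform_within_open[OF _ \<open>open S\<close> \<open>z \<in> S\<close>])
        (simp add: lin linear_scale)
    then show "g' (r *\<^sub>R u) w = r *\<^sub>R g' u w"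
      by (simp add: transfer)
  qed
  then show ?thesis
    by (simp add: linear_conv_bounded_linear)
qed

section \<open>Derivatives of log-sum-exp\<close>

locale C3_family =
  fixes S :: "'a::euclidean_space set"
    and h :: "'i::finite \<Rightarrow> 'a \<Rightarrow> real"
    and h1 :: "'i \<Rightarrow> 'a \<Rightarrow> 'a \<Rightarrow> real"
    and h2 :: "'i \<Rightarrow> 'a \<Rightarrow> 'a \<Rightarrow> 'a \<Rightarrow> real"
    and h3 :: "'i \<Rightarrow> 'a \<Rightarrow> 'a \<Rightarrow> 'a \<Rightarrow> 'a \<Rightarrow> real"
  assumes open_domain: "open S"
    and has_derivative_h: "z \<in> S \<Longrightarrow> (h i has_derivative h1 i z) (at z)"
    and has_derivative_h1: "z \<in> S \<Longrightarrow> ((\<lambda>z. h1 i z u) has_derivative h2 i z u) (at z)"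
    and has_derivative_h2: "z \<in> S \<Longrightarrow> ((\<lambda>z. h2 i z u v) has_derivative h3 i z u v) (at z)"
    and continuous_on_h3: "continuous_on S (\<lambda>z. h3 i z u v w)"
begin

lemma bounded_linear_h1: "z \<in> S \<Longrightarrow> bounded_linear (h1 i z)"
  by (rule has_derivative_bounded_linear[OF has_derivative_h])

lemma bounded_linear_h2: "z \<in> S \<Longrightarrow> bounded_linear (h2 i z u)"
  by (rule has_derivative_bounded_linear[OF has_derivative_h1])

lemma bounded_linear_h2_left: "z \<in> S \<Longrightarrow> bounded_linear (\<lambda>u. h2 i z u v)"
  by (rule bounded_linear_derivative_of_linear_family[OF open_domain _ _ has_derivative_h1])
    (auto intro: bounded_linear.linear bounded_linear_h1)

lemma bounded_linear_h3: "z \<in> S \<Longrightarrow> bounded_linear (h3 i z u v)"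
  by (rule has_derivative_bounded_linear[OF has_derivative_h2])

lemma bounded_linear_h3_left: "z \<in> S \<Longrightarrow> bounded_linear (\<lambda>u. h3 i z u v w)"
  by (rule bounded_linear_derivative_of_linear_family[OF open_domain _ _ has_derivative_h2])
    (auto intro: bounded_linear.linear bounded_linear_h2_left)

lemma bounded_linear_h3_middle: "z \<in> S \<Longrightarrow> bounded_linear (\<lambda>v. h3 i z u v w)"
  by (rule bounded_linear_derivative_of_linear_family[OF open_domain _ _ has_derivative_h2])
    (auto intro: bounded_linear.linear bounded_linear_h2)

definition softmax :: "'i \<Rightarrow> 'a \<Rightarrow> real" where
  "softmax i z = exp (h i z) / (\<Sum>j\<in>UNIV. exp (h j z))"

definition lse_d1 :: "'a \<Rightarrow> 'a \<Rightarrow> real" where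
  "lse_d1 z u = (\<Sum>i\<in>UNIV. softmax i z * h1 i z u)"

definition h1_dev :: "'i \<Rightarrow> 'a \<Rightarrow> 'a \<Rightarrow> real" where
  "h1_dev i z u = h1 i z u - lse_d1 z u"

definition lse_d2 :: "'a \<Rightarrow> 'a \<Rightarrow> 'a \<Rightarrow> real" where
  "lse_d2 z u v = (\<Sum>i\<in>UNIV. softmax i z * (h2 i z u v + h1 i z u * h1 i z v)) - lse_d1 z u * lse_d1 z v"

definition lse_d3 :: "'a \<Rightarrow> 'a \<Rightarrow> 'a \<Rightarrow> 'a \<Rightarrow> real" where
  "lse_d3 z u v w = (\<Sum>i\<in>UNIV. softmax i z *
     (h3 i z u v w + h1_dev i z w * h2 i z u v + h2 i z u w * h1_dev i z v + h2 i z v w * h1_dev i z u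
      + h1_dev i z u * h1_dev i z v * h1_dev i z w))"

lemma sum_exp_pos: "(\<Sum>j\<in>UNIV. exp (h j z)) > 0"
  by (rule sum_pos) auto

lemma softmax_nonneg: "softmax i z \<ge> 0"
  by (simp add: softmax_def sum_nonneg)

lemma sum_softmax: "(\<Sum>i\<in>UNIV. softmax i z) = 1"
  using sum_exp_pos[of z] by (simp add: softmax_def flip: sum_divide_distrib)

lemma sum_softmax_h1_dev: "(\<Sum>i\<in>UNIV. softmax i z * h1_dev i z u) = 0"
  by (simp add: h1_dev_def right_diff_distrib sum_subtractf lse_d1_def
      flip: sum_distrib_right add: sum_softmax)

lemma lse_d2_centered:
  "lse_d2 z u v = (\<Sum>i\<in>UNIV. softmax i z * (h2 i z u v + h1_dev i z u * h1_dev i z v))"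
proof -
  have "(\<Sum>i\<in>UNIV. softmax i z * (h2 i z u v + h1_dev i z u * h1_dev i z v))
      = (\<Sum>i\<in>UNIV. softmax i z * (h2 i z u v + h1 i z u * h1 i z v) - lse_d1 z v * (softmax i z * h1 i z u)
          - lse_d1 z u * (softmax i z * h1_dev i z v))"
    by (rule sum.cong) (simp_all add: h1_dev_def algebra_simps)
  also have "\<dots> = lse_d2 z u v"
    by (simp add: sum_subtractf sum_softmax_h1_dev lse_d2_def lse_d1_def flip: sum_distrib_left)
  finally show ?thesis ..
qed

lemma lse_d1_eq_ratio: "lse_d1 z u = (\<Sum>i\<in>UNIV. exp (h i z) * h1 i z u) / (\<Sum>j\<in>UNIV. exp (h j z))"
  by (simp add: lse_d1_def softmax_def sum_divide_distrib)

lemma has_derivative_log_sum_exp: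
  assumes "z \<in> S"
  shows "((\<lambda>z. ln (\<Sum>i\<in>UNIV. exp (h i z))) has_derivative lse_d1 z) (at z)"
  using sum_exp_pos[of z]
  by (auto intro!: derivative_eq_intros has_derivative_h assms
      simp: fun_eq_iff lse_d1_eq_ratio divide_inverse ac_simps)

lemma softmax_eq: "softmax i z = exp (h i z - ln (\<Sum>j\<in>UNIV. exp (h j z)))"
  using sum_exp_pos[of z] by (simp add: softmax_def exp_diff)

lemma has_derivative_softmax:
  assumes "z \<in> S"
  shows "(softmax i has_derivative (\<lambda>w. softmax i z * h1_dev i z w)) (at z)"
  unfolding softmax_eq[abs_def] h1_dev_def
  using sum_exp_pos[of z]
  by (auto intro!: derivative_eq_intros has_derivative_h has_derivative_log_sum_exp assms
      simp: fun_eq_iff lse_d1_eq_ratio divide_inverse algebra_simps)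

lemma has_derivative_lse_d1:
  assumes "z \<in> S"
  shows "((\<lambda>z. lse_d1 z u) has_derivative lse_d2 z u) (at z)"
  unfolding lse_d1_def[abs_def]
  by (rule has_derivative_eq_rhs,
      (rule derivative_eq_intros has_derivative_softmax has_derivative_h1 assms)+)
    (auto simp: lse_d2_def h1_dev_def lse_d1_def algebra_simps sum.distrib sum_subtractf
      sum_distrib_left)

lemma abs_lse_d1_le:
  assumes "\<And>i. \<bar>h1 i z v\<bar> \<le> Y"
  shows "\<bar>lse_d1 z v\<bar> \<le> Y"
proof -
  have "\<bar>lse_d1 z v\<bar> \<le> (\<Sum>i\<in>UNIV. softmax i z * \<bar>h1 i z v\<bar>)"
    unfolding lse_d1_def by (rule order_trans[OF sum_abs]) (simp add: abs_mult softmax_nonneg)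
  also have "\<dots> \<le> (\<Sum>i\<in>UNIV. softmax i z * Y)"
    by (intro sum_mono mult_left_mono assms softmax_nonneg)
  also have "\<dots> = Y"
    by (simp add: sum_softmax flip: sum_distrib_right)
  finally show ?thesis .
qed

lemma abs_h1_dev_le:
  assumes "\<And>i. \<bar>h1 i z v\<bar> \<le> Y"
  shows "\<bar>h1_dev i z v\<bar> \<le> 2 * Y"
  using assms[of i] abs_lse_d1_le[OF assms] unfolding h1_dev_def by linarith

lemma lse_d3_expand:
  "lse_d3 z u v w =
     (\<Sum>i\<in>UNIV. softmax i z * (h1_dev i z w * (h2 i z u v + h1 i z u * h1 i z v)
        + (h3 i z u v w + h2 i z u w * h1 i z v + h1 i z u * h2 i z v w)))
     - (lse_d2 z u w * lse_d1 z v + lse_d1 z u * lse_d2 z v w)"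
proof -
  have h1_eq: "h1 i z x = h1_dev i z x + lse_d1 z x" for i x
    by (simp add: h1_dev_def)
  have "(\<Sum>i\<in>UNIV. softmax i z * (h1_dev i z w * (h2 i z u v + h1 i z u * h1 i z v)
        + (h3 i z u v w + h2 i z u w * h1 i z v + h1 i z u * h2 i z v w)))
     - (lse_d2 z u w * lse_d1 z v + lse_d1 z u * lse_d2 z v w)
   = (\<Sum>i\<in>UNIV. softmax i z * (h1_dev i z w * (h2 i z u v + h1 i z u * h1 i z v)
        + (h3 i z u v w + h2 i z u w * h1 i z v + h1 i z u * h2 i z v w))
      - softmax i z * (h2 i z u w + h1_dev i z u * h1_dev i z w) * lse_d1 z v
      - lse_d1 z u * (softmax i z * (h2 i z v w + h1_dev i z v * h1_dev i z w)))"
    by (simp add: lse_d2_centered sum_subtractf sum_distrib_left sum_distrib_right)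
  also have "\<dots> = (\<Sum>i\<in>UNIV. softmax i z * (h3 i z u v w + h1_dev i z w * h2 i z u v
        + h2 i z u w * h1_dev i z v + h2 i z v w * h1_dev i z u
        + h1_dev i z u * h1_dev i z v * h1_dev i z w)
      + lse_d1 z u * lse_d1 z v * (softmax i z * h1_dev i z w))"
    by (rule sum.cong) (simp_all add: h1_eq[of _ u] h1_eq[of _ v] algebra_simps)
  also have "\<dots> = lse_d3 z u v w"
    by (simp add: sum.distrib lse_d3_def sum_softmax_h1_dev flip: sum_distrib_left)
  finally show ?thesis ..
qed

lemma has_derivative_lse_d2:
  assumes "z \<in> S"
  shows "((\<lambda>z. lse_d2 z u v) has_derivative lse_d3 z u v) (at z)"
proof -
  have second_moment: "((\<lambda>z. \<Sum>i\<in>UNIV. softmax i z * (h2 i z u v + h1 i z u * h1 i z v)) has_derivative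
      (\<lambda>w. \<Sum>i\<in>UNIV. softmax i z * (h1_dev i z w * (h2 i z u v + h1 i z u * h1 i z v)
        + (h3 i z u v w + h2 i z u w * h1 i z v + h1 i z u * h2 i z v w)))) (at z)"
    by (auto intro!: derivative_eq_intros has_derivative_softmax has_derivative_h1
        has_derivative_h2 assms simp: algebra_simps)
  show ?thesis
    unfolding lse_d2_def[abs_def]
    by (rule has_derivative_eq_rhs[OF has_derivative_diff[OF second_moment
          has_derivative_mult[OF has_derivative_lse_d1[OF assms] has_derivative_lse_d1[OF assms]]]])
      (simp add: fun_eq_iff lse_d3_expand algebra_simps)
qed

lemma continuous_on_lse_d3: "continuous_on S (\<lambda>z. lse_d3 z u v w)"
proof -
  have cont: "continuous_on S f"
    if "\<And>z. z \<in> S \<Longrightarrow> (f has_derivative f' z) (at z)" for f :: "'a \<Rightarrow> real" and f'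
    by (rule has_derivative_continuous_on) (auto intro: has_derivative_at_withinI that)
  show ?thesis
    unfolding lse_d3_def h1_dev_def
    by (intro continuous_intros continuous_on_h3 cont[OF has_derivative_softmax]
        cont[OF has_derivative_h1] cont[OF has_derivative_h2] cont[OF has_derivative_lse_d1])
qed

lemma bounded_linear_lse_d1: "z \<in> S \<Longrightarrow> bounded_linear (lse_d1 z)"
  unfolding lse_d1_def by (intro bounded_linear_intros bounded_linear_h1)

lemma bounded_linear_h1_dev: "z \<in> S \<Longrightarrow> bounded_linear (h1_dev i z)"
  unfolding h1_dev_def by (intro bounded_linear_sub bounded_linear_h1 bounded_linear_lse_d1)

lemma bounded_linear_lse_d2:
  assumes "z \<in> S"
  shows "bounded_linear (lse_d2 z u)" and "bounded_linear (\<lambda>u. lse_d2 z u v)"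
  unfolding lse_d2_def
  by (intro bounded_linear_intros bounded_linear_sub bounded_linear_h1 bounded_linear_h2
      bounded_linear_h2_left bounded_linear_lse_d1 assms)+

lemma bounded_linear_lse_d3:
  assumes "z \<in> S"
  shows "bounded_linear (lse_d3 z u v)" and "bounded_linear (\<lambda>v. lse_d3 z u v w)"
    and "bounded_linear (\<lambda>u. lse_d3 z u v w)"
  unfolding lse_d3_def
  by (intro bounded_linear_intros bounded_linear_h1_dev bounded_linear_h2 bounded_linear_h2_left
      bounded_linear_h3 bounded_linear_h3_middle bounded_linear_h3_left assms)+

text \<open>The arguments of the bounded linear maps come in reverse order: \<open>lse_D2 z w\<close> is the
  derivative of \<open>lse_D1\<close> in direction \<open>w\<close>, so \<open>lse_D2 z w u = lse_d2 z u w\<close>.\<close>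

definition lse_D1 :: "'a \<Rightarrow> 'a \<Rightarrow>\<^sub>L real" where
  "lse_D1 z = Blinfun (lse_d1 z)"

definition lse_D2 :: "'a \<Rightarrow> 'a \<Rightarrow>\<^sub>L 'a \<Rightarrow>\<^sub>L real" where
  "lse_D2 z = Blinfun (\<lambda>w. Blinfun (\<lambda>u. lse_d2 z u w))"

definition lse_D3 :: "'a \<Rightarrow> 'a \<Rightarrow>\<^sub>L 'a \<Rightarrow>\<^sub>L 'a \<Rightarrow>\<^sub>L real" where
  "lse_D3 z = Blinfun (\<lambda>w. Blinfun (\<lambda>v. Blinfun (\<lambda>u. lse_d3 z u v w)))"

lemma lse_D1_apply: "z \<in> S \<Longrightarrow> lse_D1 z u = lse_d1 z u"
  by (simp add: lse_D1_def bounded_linear_Blinfun_apply bounded_linear_lse_d1)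

lemma lse_D2_apply: "z \<in> S \<Longrightarrow> lse_D2 z w u = lse_d2 z u w"
  unfolding lse_D2_def by (rule Blinfun2_apply) (auto intro: bounded_linear_lse_d2)

lemma lse_D3_apply: "z \<in> S \<Longrightarrow> lse_D3 z w v u = lse_d3 z u v w"
  unfolding lse_D3_def by (rule Blinfun3_apply) (auto intro: bounded_linear_lse_d3)

lemma C3_derivs_on_log_sum_exp:
  assumes "\<And>z. z \<in> S \<Longrightarrow> f z = ln (\<Sum>i\<in>UNIV. exp (h i z))"
  shows "C3_derivs_on S f lse_D1 lse_D2 lse_D3"
  unfolding C3_derivs_on_def
proof (intro conjI ballI)
  fix z assume z: "z \<in> S"
  have D1: "blinfun_apply (lse_D1 z) = lse_d1 z"
    using z by (simp add: lse_D1_apply fun_eq_iff)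
  show "(f has_derivative blinfun_apply (lse_D1 z)) (at z)"
    unfolding D1 using has_derivative_log_sum_exp[OF z]
    by (rule has_derivative_transform_within_open[OF _ open_domain z]) (simp add: assms)
  show "(lse_D1 has_derivative blinfun_apply (lse_D2 z)) (at z)"
  proof (rule has_derivative_blinfun_componentwise)
    fix u
    show "((\<lambda>y. lse_D1 y u) has_derivative (\<lambda>w. lse_D2 z w u)) (at z)"
      using has_derivative_lse_d1[OF z, of u]
      by (rule has_derivative_transform_within_open[OF _ open_domain z, THEN has_derivative_eq_rhs])
        (simp_all add: lse_D1_apply lse_D2_apply z)
  qed
  show "(lse_D2 has_derivative blinfun_apply (lse_D3 z)) (at z)"
  proof (intro has_derivative_blinfun_componentwise)
    fix v u
    show "((\<lambda>y. lse_D2 y v u) has_derivative (\<lambda>w. lse_D3 z w v u)) (at z)"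
      using has_derivative_lse_d2[OF z, of u v]
      by (rule has_derivative_transform_within_open[OF _ open_domain z, THEN has_derivative_eq_rhs])
        (simp_all add: lse_D2_apply lse_D3_apply z)
  qed
next
  show "continuous_on S lse_D3"
  proof (intro continuous_on_blinfun_componentwise)
    fix w v u
    show "continuous_on S (\<lambda>z. lse_D3 z w v u)"
      using continuous_on_lse_d3[of u v w] by (rule continuous_on_eq) (simp add: lse_D3_apply)
  qed
qed

end

section \<open>The normal-heat exponents\<close>

type_synonym 'n point = "(real^'n) \<times> real"

definition nh_exponent :: "'n::finite \<Rightarrow> 'n point \<Rightarrow> real" where
  "nh_exponent i z = (fst z $ i)\<^sup>2 / (2 * snd z) - ln (snd z) / 2"

definition nh_d1 :: "'n::finite \<Rightarrow> 'n point \<Rightarrow> 'n point \<Rightarrow> real" where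
  "nh_d1 i z u = fst z $ i * fst u $ i / snd z - (fst z $ i)\<^sup>2 * snd u / (2 * (snd z)\<^sup>2)
     - snd u / (2 * snd z)"

definition nh_d2 :: "'n::finite \<Rightarrow> 'n point \<Rightarrow> 'n point \<Rightarrow> 'n point \<Rightarrow> real" where
  "nh_d2 i z u v = fst u $ i * fst v $ i / snd z
     - fst z $ i * (fst u $ i * snd v + fst v $ i * snd u) / (snd z)\<^sup>2
     + (fst z $ i)\<^sup>2 * snd u * snd v / (snd z)^3 + snd u * snd v / (2 * (snd z)\<^sup>2)"

definition nh_d3 :: "'n::finite \<Rightarrow> 'n point \<Rightarrow> 'n point \<Rightarrow> 'n point \<Rightarrow> 'n point \<Rightarrow> real" where
  "nh_d3 i z u v w = - fst u $ i * fst v $ i * snd w / (snd z)\<^sup>2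
     - fst w $ i * (fst u $ i * snd v + fst v $ i * snd u) / (snd z)\<^sup>2
     + 2 * fst z $ i * (fst u $ i * snd v + fst v $ i * snd u) * snd w / (snd z)^3
     + 2 * fst z $ i * fst w $ i * snd u * snd v / (snd z)^3
     - 3 * (fst z $ i)\<^sup>2 * snd u * snd v * snd w / (snd z)^4
     - snd u * snd v * snd w / (snd z)^3"

lemma has_derivative_space_coord [derivative_intros]:
  "((\<lambda>z::'n::finite point. fst z $ i) has_derivative (\<lambda>u. fst u $ i)) F"
  by (rule bounded_linear_imp_has_derivative,
      rule bounded_linear_compose[OF bounded_linear_vec_nth bounded_linear_fst])

lemma has_derivative_nh_exponent:
  "snd z > 0 \<Longrightarrow> (nh_exponent i has_derivative nh_d1 i z) (at z)"
  unfolding nh_exponent_def[abs_def] nh_d1_def[abs_def]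
  by (auto intro!: derivative_eq_intros simp: field_simps power2_eq_square)

lemma has_derivative_nh_d1:
  "snd z > 0 \<Longrightarrow> ((\<lambda>z. nh_d1 i z u) has_derivative nh_d2 i z u) (at z)"
  unfolding nh_d1_def[abs_def] nh_d2_def[abs_def]
  by (auto intro!: derivative_eq_intros simp: field_simps eval_nat_numeral)

lemma has_derivative_nh_d2:
  "snd z > 0 \<Longrightarrow> ((\<lambda>z. nh_d2 i z u v) has_derivative nh_d3 i z u v) (at z)"
  unfolding nh_d2_def[abs_def] nh_d3_def[abs_def]
  by (auto intro!: derivative_eq_intros simp: field_simps eval_nat_numeral)

lemma continuous_on_nh_d3: "continuous_on {z :: 'n::finite point. 0 < snd z} (\<lambda>z. nh_d3 i z u v w)"
  unfolding nh_d3_def by (intro continuous_intros) auto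

interpretation nh: C3_family "{z :: 'n::finite point. 0 < snd z}" nh_exponent nh_d1 nh_d2 nh_d3
proof
  show "open {z :: 'n point. 0 < snd z}"
    by (intro open_Collect_less continuous_intros)
qed (simp_all add: has_derivative_nh_exponent has_derivative_nh_d1 has_derivative_nh_d2
    continuous_on_nh_d3)

lemma logPhi_eq_log_sum_exp:
  "snd z > 0 \<Longrightarrow> logPhi z = ln (\<Sum>i\<in>UNIV. exp (nh_exponent i z))"
  unfolding logPhi_def nh_exponent_def phi_NH_def
  by (simp add: powr_def exp_add[symmetric] exp_diff algebra_simps)

section \<open>The third derivative in scaled coordinates\<close>

text \<open>Coordinates of a direction that diagonalise the Hessian of every exponent.\<close>

definition nh_alpha :: "'n::finite \<Rightarrow> 'n point \<Rightarrow> 'n point \<Rightarrow> real" where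
  "nh_alpha i z u = (fst u $ i - fst z $ i * snd u / snd z) / sqrt (snd z)"

definition nh_beta :: "'n::finite point \<Rightarrow> 'n point \<Rightarrow> real" where
  "nh_beta z u = snd u / snd z"

lemma obtain_sqrt_time:
  assumes "snd z > (0::real)"
  obtains r where "r > 0" "snd z = r\<^sup>2" "sqrt (snd z) = r"
  using assms by (metis real_sqrt_gt_zero real_sqrt_pow2 less_imp_le)

lemma nh_d1_eq:
  assumes "snd z > 0"
  shows "nh_d1 i z v = fst z $ i / sqrt (snd z) * nh_alpha i z v
    + (fst z $ i / sqrt (snd z))\<^sup>2 * nh_beta z v / 2 - nh_beta z v / 2"
proof -
  obtain r where r: "r > 0" "snd z = r\<^sup>2" "sqrt (snd z) = r"
    using obtain_sqrt_time[OF assms] .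
  show ?thesis
    unfolding nh_d1_def nh_alpha_def nh_beta_def r(3) unfolding r(2)
    using r(1) by (simp add: field_simps) algebra
qed

lemma nh_d2_eq:
  assumes "snd z > 0"
  shows "nh_d2 i z u v = nh_alpha i z u * nh_alpha i z v + nh_beta z u * nh_beta z v / 2"
proof -
  obtain r where r: "r > 0" "snd z = r\<^sup>2" "sqrt (snd z) = r"
    using obtain_sqrt_time[OF assms] .
  show ?thesis
    unfolding nh_d2_def nh_alpha_def nh_beta_def r(3) unfolding r(2)
    using r(1) by (simp add: field_simps) algebra
qed

lemma nh_d3_eq:
  assumes "snd z > 0"
  shows "nh_d3 i z u v w = - (nh_beta z u * nh_alpha i z v * nh_alpha i z w
      + nh_beta z v * nh_alpha i z u * nh_alpha i z w + nh_beta z w * nh_alpha i z u * nh_alpha i z v)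
    - nh_beta z u * nh_beta z v * nh_beta z w"
proof -
  obtain r where r: "r > 0" "snd z = r\<^sup>2" "sqrt (snd z) = r"
    using obtain_sqrt_time[OF assms] .
  show ?thesis
    unfolding nh_d3_def nh_alpha_def nh_beta_def r(3) unfolding r(2)
    using r(1) by (simp add: field_simps) algebra
qed

lemma nh_lse_d2_nonneg:
  assumes "snd z > 0"
  shows "nh.lse_d2 z u u \<ge> 0"
  unfolding nh.lse_d2_centered
  by (intro sum_nonneg mult_nonneg_nonneg nh.softmax_nonneg)
    (auto simp: nh_d2_eq[OF assms] intro!: add_nonneg_nonneg)

text \<open>For an index \<open>i\<close>, \<open>\<alpha>, \<beta>\<close> are \<open>nh_alpha i z u, nh_beta z u\<close>, \<open>\<gamma>, \<rho>\<close> the same for \<open>v\<close>,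
  and \<open>e, d\<close> are \<open>h1_dev i z u, h1_dev i z v\<close>; the left-hand side is then the \<open>i\<close>-th summand
  of \<open>lse_d3 z v u u\<close>, and \<open>\<alpha>\<^sup>2 + \<beta>\<^sup>2 / 2 + e\<^sup>2\<close> the one of \<open>lse_d2 z u u\<close>.\<close>
lemma third_order_term_le:
  fixes \<alpha> \<beta> \<gamma> \<rho> e d C Y :: real
  assumes \<gamma>: "\<bar>\<gamma>\<bar> \<le> C" and d: "\<bar>d\<bar> \<le> 2 * Y"
  shows "\<bar>- \<rho> * (\<alpha>\<^sup>2 + \<beta>\<^sup>2) - 2 * \<beta> * \<alpha> * \<gamma> + 2 * e * (\<alpha> * \<gamma> + \<beta> * \<rho> / 2)
           + d * (\<alpha>\<^sup>2 + \<beta>\<^sup>2 / 2) + e\<^sup>2 * d\<bar>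
         \<le> (3 * \<bar>\<rho>\<bar> + 3 * C + 2 * Y) * (\<alpha>\<^sup>2 + \<beta>\<^sup>2 / 2 + e\<^sup>2)"
proof -
  define Q where "Q = \<alpha>\<^sup>2 + \<beta>\<^sup>2 / 2"
  have "C \<ge> 0" "Q \<ge> 0"
    using \<gamma> by (auto simp: Q_def)
  have amgm: "2 * \<bar>a\<bar> * \<bar>b\<bar> \<le> a\<^sup>2 + b\<^sup>2" for a b :: real
    using sum_squares_bound[of "\<bar>a\<bar>" "\<bar>b\<bar>"] by simp
  have p1: "\<bar>\<rho> * (\<alpha>\<^sup>2 + \<beta>\<^sup>2)\<bar> \<le> 2 * \<bar>\<rho>\<bar> * Q"
  proof -
    have "\<bar>\<rho> * (\<alpha>\<^sup>2 + \<beta>\<^sup>2)\<bar> = \<bar>\<rho>\<bar> * (\<alpha>\<^sup>2 + \<beta>\<^sup>2)" by (simp add: abs_mult)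
    also have "\<dots> \<le> \<bar>\<rho>\<bar> * (2 * Q)" by (rule mult_left_mono) (auto simp: Q_def)
    finally show ?thesis by simp
  qed
  have p2: "\<bar>2 * \<beta> * \<alpha> * \<gamma>\<bar> \<le> 2 * C * Q"
  proof -
    have "\<bar>2 * \<beta> * \<alpha> * \<gamma>\<bar> = (2 * \<bar>\<alpha>\<bar> * \<bar>\<beta>\<bar>) * \<bar>\<gamma>\<bar>" by (simp add: abs_mult)
    also have "\<dots> \<le> (\<alpha>\<^sup>2 + \<beta>\<^sup>2) * C" by (rule mult_mono[OF amgm \<gamma>]) auto
    also have "\<dots> \<le> 2 * C * Q" using \<open>C \<ge> 0\<close> by (simp add: Q_def algebra_simps)
    finally show ?thesis .
  qed
  have p3: "\<bar>2 * e * (\<alpha> * \<gamma>)\<bar> \<le> C * (Q + e\<^sup>2)"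
  proof -
    have "\<bar>2 * e * (\<alpha> * \<gamma>)\<bar> = (2 * \<bar>\<alpha>\<bar> * \<bar>e\<bar>) * \<bar>\<gamma>\<bar>" by (simp add: abs_mult)
    also have "\<dots> \<le> (\<alpha>\<^sup>2 + e\<^sup>2) * C" by (rule mult_mono[OF amgm \<gamma>]) auto
    also have "\<dots> \<le> C * (Q + e\<^sup>2)" using \<open>C \<ge> 0\<close> by (simp add: Q_def algebra_simps)
    finally show ?thesis .
  qed
  have p4: "\<bar>2 * e * (\<beta> * \<rho> / 2)\<bar> \<le> \<bar>\<rho>\<bar> * (Q + e\<^sup>2)"
  proof -
    have "\<bar>2 * e * (\<beta> * \<rho> / 2)\<bar> = \<bar>\<rho>\<bar> * (\<bar>\<beta>\<bar> * \<bar>e\<bar>)" by (simp add: abs_mult)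
    also have "\<dots> \<le> \<bar>\<rho>\<bar> * (Q + e\<^sup>2)"
    proof (rule mult_left_mono)
      show "\<bar>\<beta>\<bar> * \<bar>e\<bar> \<le> Q + e\<^sup>2"
        using amgm[of \<beta> e] zero_le_power2[of \<alpha>] zero_le_power2[of e] unfolding Q_def by linarith
    qed simp
    finally show ?thesis .
  qed
  have p5: "\<bar>d * Q\<bar> \<le> 2 * Y * Q" and p6: "\<bar>e\<^sup>2 * d\<bar> \<le> 2 * Y * e\<^sup>2"
    using mult_right_mono[OF d \<open>Q \<ge> 0\<close>] mult_right_mono[OF d zero_le_power2[of e]]
    by (simp_all add: abs_mult \<open>Q \<ge> 0\<close> mult.commute)
  have "\<bar>- \<rho> * (\<alpha>\<^sup>2 + \<beta>\<^sup>2) - 2 * \<beta> * \<alpha> * \<gamma> + 2 * e * (\<alpha> * \<gamma> + \<beta> * \<rho> / 2)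
           + d * (\<alpha>\<^sup>2 + \<beta>\<^sup>2 / 2) + e\<^sup>2 * d\<bar>
      = \<bar>- (\<rho> * (\<alpha>\<^sup>2 + \<beta>\<^sup>2)) - 2 * \<beta> * \<alpha> * \<gamma> + 2 * e * (\<alpha> * \<gamma>) + 2 * e * (\<beta> * \<rho> / 2)
           + d * Q + e\<^sup>2 * d\<bar>"
    by (simp add: Q_def algebra_simps)
  also have "\<dots> \<le> 2 * \<bar>\<rho>\<bar> * Q + 2 * C * Q + C * (Q + e\<^sup>2) + \<bar>\<rho>\<bar> * (Q + e\<^sup>2) + 2 * Y * Q + 2 * Y * e\<^sup>2"
    using p1 p2 p3 p4 p5 p6 by linarith
  also have "\<dots> \<le> (3 * \<bar>\<rho>\<bar> + 3 * C + 2 * Y) * (Q + e\<^sup>2)"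
    using \<open>C \<ge> 0\<close> by (simp add: algebra_simps)
  finally show ?thesis
    by (simp add: Q_def)
qed

lemma abs_scaled_coord_le:
  assumes "snd z > 0" and "(fst z $ i)\<^sup>2 / snd z \<le> K"
  shows "\<bar>fst z $ i / sqrt (snd z)\<bar> \<le> sqrt K"
proof -
  have "(fst z $ i / sqrt (snd z))\<^sup>2 = (fst z $ i)\<^sup>2 / snd z"
    using assms(1) by (simp add: power_divide)
  then show ?thesis
    using assms(2) real_sqrt_le_mono by (metis real_sqrt_abs)
qed

lemma abs_nh_alpha_le:
  assumes "snd z > 0" and "(fst z $ i)\<^sup>2 / snd z \<le> K"
  shows "\<bar>nh_alpha i z v\<bar> \<le> infnorm (fst v) / sqrt (snd z) + sqrt K * \<bar>nh_beta z v\<bar>"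
proof -
  have "nh_alpha i z v = fst v $ i / sqrt (snd z) - fst z $ i / sqrt (snd z) * nh_beta z v"
    using assms(1) by (simp add: nh_alpha_def nh_beta_def field_simps)
  then have "\<bar>nh_alpha i z v\<bar> \<le> \<bar>fst v $ i / sqrt (snd z)\<bar> + \<bar>fst z $ i / sqrt (snd z) * nh_beta z v\<bar>"
    by (simp only: abs_triangle_ineq4)
  also have "\<dots> = \<bar>fst v $ i\<bar> / sqrt (snd z) + \<bar>fst z $ i / sqrt (snd z)\<bar> * \<bar>nh_beta z v\<bar>"
    using assms(1) by (simp add: abs_mult abs_divide)
  also have "\<dots> \<le> infnorm (fst v) / sqrt (snd z) + sqrt K * \<bar>nh_beta z v\<bar>"
    using assms by (intro add_mono divide_right_mono mult_right_mono component_le_infnorm_cart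
        abs_scaled_coord_le) auto
  finally show ?thesis .
qed

lemma abs_nh_d1_le:
  assumes "snd z > 0" and "(fst z $ i)\<^sup>2 / snd z \<le> K" and "1 \<le> K"
  shows "\<bar>nh_d1 i z v\<bar> \<le> sqrt K * infnorm (fst v) / sqrt (snd z) + 2 * K * \<bar>nh_beta z v\<bar>"
proof -
  define r where "r = fst z $ i / sqrt (snd z)"
  have r2: "r\<^sup>2 \<le> K"
    using assms(1,2) by (simp add: r_def power_divide)
  have triangle: "\<bar>a + b - c\<bar> \<le> \<bar>a\<bar> + \<bar>b\<bar> + \<bar>c\<bar>" for a b c :: real
    by arith
  have "\<bar>nh_d1 i z v\<bar> \<le> \<bar>r * nh_alpha i z v\<bar> + \<bar>r\<^sup>2 * nh_beta z v / 2\<bar> + \<bar>nh_beta z v / 2\<bar>"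
    unfolding nh_d1_eq[OF assms(1)] r_def[symmetric] by (rule triangle)
  also have "\<dots> = \<bar>r\<bar> * \<bar>nh_alpha i z v\<bar> + r\<^sup>2 * \<bar>nh_beta z v\<bar> / 2 + \<bar>nh_beta z v\<bar> / 2"
    by (simp add: abs_mult)
  also have "\<dots> \<le> sqrt K * (infnorm (fst v) / sqrt (snd z) + sqrt K * \<bar>nh_beta z v\<bar>)
      + K * \<bar>nh_beta z v\<bar> / 2 + K * \<bar>nh_beta z v\<bar> / 2"
    using assms r2 unfolding r_def
    by (intro add_mono mult_mono abs_scaled_coord_le abs_nh_alpha_le divide_right_mono mult_right_mono)
      (auto simp: mult_right_mono[of 1 K, simplified])
  also have "\<dots> = sqrt K * infnorm (fst v) / sqrt (snd z) + 2 * K * \<bar>nh_beta z v\<bar>"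
    using assms(3) by (simp add: algebra_simps)
  finally show ?thesis
    by simp
qed

lemma nh_third_summand_le:
  fixes z u v :: "'n::finite point"
  assumes z: "snd z > 0" and K: "\<And>i. (fst z $ i)\<^sup>2 / snd z \<le> K" and "1 \<le> K"
  defines "b \<equiv> infnorm (fst v) / sqrt (snd z)" and "\<rho> \<equiv> \<bar>nh_beta z v\<bar>"
  shows "\<bar>nh_d3 i z v u u + nh.h1_dev i z u * nh_d2 i z v u + nh_d2 i z v u * nh.h1_dev i z u
      + nh_d2 i z u u * nh.h1_dev i z v + nh.h1_dev i z v * nh.h1_dev i z u * nh.h1_dev i z u\<bar>
    \<le> (3 * \<rho> + 3 * (b + sqrt K * \<rho>) + 2 * (sqrt K * b + 2 * K * \<rho>))
      * (nh_d2 i z u u + nh.h1_dev i z u * nh.h1_dev i z u)"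
proof -
  have "\<bar>nh_alpha i z v\<bar> \<le> b + sqrt K * \<rho>"
    using abs_nh_alpha_le[OF z K] by (simp add: b_def \<rho>_def)
  moreover have "\<bar>nh.h1_dev i z v\<bar> \<le> 2 * (sqrt K * b + 2 * K * \<rho>)"
    using abs_nh_d1_le[OF z K \<open>1 \<le> K\<close>] by (intro nh.abs_h1_dev_le) (simp add: b_def \<rho>_def)
  ultimately show ?thesis
    using third_order_term_le[of "nh_alpha i z v" "b + sqrt K * \<rho>" "nh.h1_dev i z v"
        "sqrt K * b + 2 * K * \<rho>" "nh_beta z v"
        "nh_alpha i z u" "nh_beta z u" "nh.h1_dev i z u"]
    by (simp add: nh_d2_eq[OF z] nh_d3_eq[OF z] \<rho>_def power2_eq_square algebra_simps)
qed

lemma third_order_coeff_le: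
  fixes K b \<rho> :: real
  assumes "1 \<le> K" "0 \<le> b" "0 \<le> \<rho>"
  shows "3 * \<rho> + 3 * (b + sqrt K * \<rho>) + 2 * (sqrt K * b + 2 * K * \<rho>) \<le> 8 * sqrt K * b + 16 * K * \<rho>"
proof -
  have "1 \<le> sqrt K"
    using assms(1) by simp
  then have "sqrt K \<le> K"
    using mult_left_mono[of 1 "sqrt K" "sqrt K"] assms(1) by simp
  have "b \<le> sqrt K * b" "sqrt K * \<rho> \<le> K * \<rho>" "\<rho> \<le> K * \<rho>" "0 \<le> sqrt K * b" "0 \<le> K * \<rho>"
    using \<open>1 \<le> sqrt K\<close> \<open>sqrt K \<le> K\<close> assms
    by (auto intro: mult_right_mono[of 1 "sqrt K" b, simplified] mult_right_mono
        mult_right_mono[of 1 K, simplified])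
  then show ?thesis
    by (simp add: algebra_simps)
qed

lemma nh_lse_d3_le:
  assumes z: "snd z > 0" and K: "\<And>i. (fst z $ i)\<^sup>2 / snd z \<le> K" and "1 \<le> K"
  shows "\<bar>nh.lse_d3 z v u u\<bar>
    \<le> (8 * sqrt K * infnorm (fst v) / sqrt (snd z) + 16 * K * \<bar>snd v\<bar> / snd z) * nh.lse_d2 z u u"
proof -
  define b where "b = infnorm (fst v) / sqrt (snd z)"
  define \<rho> where "\<rho> = \<bar>nh_beta z v\<bar>"
  define L where "L = 3 * \<rho> + 3 * (b + sqrt K * \<rho>) + 2 * (sqrt K * b + 2 * K * \<rho>)"
  have summand: "\<bar>nh_d3 i z v u u + nh.h1_dev i z u * nh_d2 i z v u + nh_d2 i z v u * nh.h1_dev i z u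
      + nh_d2 i z u u * nh.h1_dev i z v + nh.h1_dev i z v * nh.h1_dev i z u * nh.h1_dev i z u\<bar>
    \<le> L * (nh_d2 i z u u + nh.h1_dev i z u * nh.h1_dev i z u)" for i
    using nh_third_summand_le[OF z K \<open>1 \<le> K\<close>] unfolding L_def b_def \<rho>_def .
  have "\<bar>nh.lse_d3 z v u u\<bar>
      \<le> (\<Sum>i\<in>UNIV. nh.softmax i z * (L * (nh_d2 i z u u + nh.h1_dev i z u * nh.h1_dev i z u)))"
    unfolding nh.lse_d3_def
    by (rule order_trans[OF sum_abs], rule sum_mono,
        simp only: abs_mult abs_of_nonneg[OF nh.softmax_nonneg],
        rule mult_left_mono[OF summand nh.softmax_nonneg])
  also have "\<dots> = L * nh.lse_d2 z u u"
    by (simp add: nh.lse_d2_centered sum_distrib_left algebra_simps)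
  also have "\<dots> \<le> (8 * sqrt K * b + 16 * K * \<rho>) * nh.lse_d2 z u u"
    unfolding L_def using z \<open>1 \<le> K\<close>
    by (intro mult_right_mono third_order_coeff_le nh_lse_d2_nonneg)
      (simp_all add: b_def \<rho>_def infnorm_pos_le)
  also have "8 * sqrt K * b + 16 * K * \<rho>
      = 8 * sqrt K * infnorm (fst v) / sqrt (snd z) + 16 * K * \<bar>snd v\<bar> / snd z"
    using z by (simp add: b_def \<rho>_def nh_beta_def abs_divide)
  finally show ?thesis .
qed

section \<open>The segment\<close>

lemma segment_time_ge_min:
  fixes t dt s :: real
  assumes "s \<in> {0..1}"
  shows "min t (t + dt) \<le> t + s * dt"
proof (cases "dt \<ge> 0")
  case True
  then show ?thesis using assms by simp
next
  case False
  then have "(1 - s) * dt \<le> 0"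
    using assms by (intro mult_nonneg_nonpos) auto
  then show ?thesis by (simp add: algebra_simps)
qed

lemma Inf_segment_time:
  fixes t dt :: real
  shows "Inf ((\<lambda>s. t + s * dt) ` {0..1}) = min t (t + dt)"
proof (rule cInf_eq_minimum)
  have "t \<in> (\<lambda>s. t + s * dt) ` {0..1}" "t + dt \<in> (\<lambda>s. t + s * dt) ` {0..1}"
    by (force intro: image_eqI[of _ _ 0], force intro: image_eqI[of _ _ 1])
  then show "min t (t + dt) \<in> (\<lambda>s. t + s * dt) ` {0..1}"
    by (simp add: min_def)
qed (auto intro: segment_time_ge_min)

lemma segment_ratio_le_Sup:
  fixes x dx :: "real^'n" and t dt s :: real
  assumes "t > 0" "t + dt > 0" "s \<in> {0..1}"
  shows "(x $ i + s * dx $ i)\<^sup>2 / (t + s * dt)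
    \<le> Sup ((\<lambda>s. Max (range (\<lambda>i. (x $ i + s * dx $ i)\<^sup>2 / (t + s * dt)))) ` {0..1})"
proof -
  define m where "m = min t (t + dt)"
  have m: "0 < m" "\<And>s. s \<in> {0..1} \<Longrightarrow> m \<le> t + s * dt"
    using assms by (auto simp: m_def segment_time_ge_min)
  have ratio_le: "(x $ i + s * dx $ i)\<^sup>2 / (t + s * dt) \<le> (norm x + norm dx)\<^sup>2 / m"
    if "s \<in> {0..1}" for i s
  proof -
    have "\<bar>x $ i + s * dx $ i\<bar> \<le> norm (x + s *\<^sub>R dx)"
      using component_le_norm_cart[of "x + s *\<^sub>R dx" i] by simp
    also have "\<dots> \<le> norm x + norm dx"
      using that norm_triangle_ineq[of x "s *\<^sub>R dx"] mult_left_le_one_le[of "norm dx" s] by auto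
    finally have "(x $ i + s * dx $ i)\<^sup>2 \<le> (norm x + norm dx)\<^sup>2"
      by (metis abs_ge_zero power2_abs power_mono)
    then show ?thesis
      using m(2)[OF that] \<open>0 < m\<close> by (intro frac_le) auto
  qed
  have bdd: "bdd_above ((\<lambda>s. Max (range (\<lambda>i. (x $ i + s * dx $ i)\<^sup>2 / (t + s * dt)))) ` {0..1})"
    using ratio_le by (intro bdd_aboveI[of _ "(norm x + norm dx)\<^sup>2 / m"]) auto
  have "(x $ i + s * dx $ i)\<^sup>2 / (t + s * dt) \<le> Max (range (\<lambda>i. (x $ i + s * dx $ i)\<^sup>2 / (t + s * dt)))"
    by (rule Max_ge) auto
  also have "\<dots> \<le> Sup ((\<lambda>s. Max (range (\<lambda>i. (x $ i + s * dx $ i)\<^sup>2 / (t + s * dt)))) ` {0..1})"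
    using assms(3) by (intro cSup_upper bdd) auto
  finally show ?thesis .
qed

lemma coeff_antimono:
  fixes K T tau b c :: real
  assumes "0 < tau" "tau \<le> T" "0 \<le> K" "0 \<le> b" "0 \<le> c"
  shows "8 * sqrt K * b / sqrt T + 16 * K * c / T \<le> 8 * sqrt K / sqrt tau * b + 16 * K / tau * c"
proof -
  have "b / sqrt T \<le> b / sqrt tau" "c / T \<le> c / tau"
    using assms by (auto intro!: divide_left_mono)
  then have "8 * sqrt K * (b / sqrt T) + 16 * K * (c / T)
      \<le> 8 * sqrt K * (b / sqrt tau) + 16 * K * (c / tau)"
    using assms by (intro add_mono mult_left_mono) auto
  then show ?thesis
    by (simp only: times_divide_eq_left times_divide_eq_right)
qed

lemma nh_self_concordance_bound:
  fixes z u v :: "'n::finite point"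
  assumes "0 < tau" "tau \<le> snd z" "\<And>i. (fst z $ i)\<^sup>2 / snd z \<le> K" "1 \<le> K"
  shows "\<bar>nh.lse_D3 z u u v\<bar>
    \<le> (8 * sqrt K / sqrt tau * infnorm (fst v) + 16 * K / tau * \<bar>snd v\<bar>) * nh.lse_D2 z u u"
proof -
  have z: "0 < snd z"
    using assms(1,2) by linarith
  have "\<bar>nh.lse_D3 z u u v\<bar> = \<bar>nh.lse_d3 z v u u\<bar>"
    by (simp add: nh.lse_D3_apply z)
  also have "\<dots> \<le> (8 * sqrt K * infnorm (fst v) / sqrt (snd z) + 16 * K * \<bar>snd v\<bar> / snd z)
      * nh.lse_d2 z u u"
    by (rule nh_lse_d3_le[OF z assms(3,4)])
  also have "\<dots> \<le> (8 * sqrt K / sqrt tau * infnorm (fst v) + 16 * K / tau * \<bar>snd v\<bar>) * nh.lse_d2 z u u"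
    using assms
    by (intro mult_right_mono coeff_antimono nh_lse_d2_nonneg z) (auto simp: infnorm_pos_le)
  finally show ?thesis
    by (simp add: nh.lse_D2_apply z)
qed

theorem proposition6p10:
  fixes x dx :: "real^'n" and t dt :: real
  assumes "t > 0" and "t + dt > 0"
  defines "tstar \<equiv> Inf ((\<lambda>s. t + s * dt) ` {0..1})"
    and "Kseg \<equiv> Sup ((\<lambda>s. Max (range (\<lambda>i. (x $ i + s * dx $ i)\<^sup>2 / (t + s * dt)))) ` {0..1})"
  shows "gen_self_concordant (logPhi :: (real^'n) \<times> real \<Rightarrow> real) {z. snd z > 0}
           (\<lambda>(xb, tb). (8 * sqrt (max Kseg 1) / sqrt tstar) * infnorm xb
                       + (16 * max Kseg 1 / tstar) * \<bar>tb\<bar>) 1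
           {(x + s *\<^sub>R dx, t + s * dt) | s. s \<in> {0..1}}"
proof -
  have tstar: "tstar = min t (t + dt)"
    unfolding tstar_def by (rule Inf_segment_time)
  have on_segment: "tstar \<le> snd z \<and> (\<forall>i. (fst z $ i)\<^sup>2 / snd z \<le> max Kseg 1)"
    if "z \<in> {(x + s *\<^sub>R dx, t + s * dt) | s. s \<in> {0..1}}" for z
    using that segment_time_ge_min segment_ratio_le_Sup[OF assms(1,2)]
    by (fastforce simp: tstar Kseg_def intro: le_max_iff_disj[THEN iffD2])
  show ?thesis
    unfolding gen_self_concordant_def
  proof (intro conjI exI[of _ nh.lse_D1] exI[of _ nh.lse_D2] exI[of _ nh.lse_D3] ballI allI)
    show "open {z :: 'n point. 0 < snd z}"
      by (rule nh.open_domain)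
    show "{(x + s *\<^sub>R dx, t + s * dt) | s. s \<in> {0..1}} \<subseteq> {z. 0 < snd z}"
      using on_segment assms(1,2) by (fastforce simp: tstar)
    show "C3_derivs_on {z. 0 < snd z} logPhi nh.lse_D1 nh.lse_D2 nh.lse_D3"
      by (rule nh.C3_derivs_on_log_sum_exp) (simp add: logPhi_eq_log_sum_exp)
  next
    fix z u v
    assume "z \<in> {(x + s *\<^sub>R dx, t + s * dt) | s. s \<in> {0..1}}"
    then show "\<bar>nh.lse_D3 z u u v\<bar>
        \<le> 1 * (case v of (xb, tb) \<Rightarrow> 8 * sqrt (max Kseg 1) / sqrt tstar * infnorm xb
          + 16 * max Kseg 1 / tstar * \<bar>tb\<bar>) * nh.lse_D2 z u u"
      using on_segment assms(1,2) nh_self_concordance_bound[of tstar z "max Kseg 1" u v]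
      by (simp add: tstar case_prod_unfold)
  qed
qed

end
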